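(* Let $X$ be a random variable with values in $[0,C]$, $r:[0,C]\to[E,D]$ measurable with $E\le0\le D$, $\lambda>0$, and let $c^*$ be the unique root on $\mathbb{R}_+$ of $\Phi(c)=\lambda\,\mathbb{E}[(r(X)-cX)_+]-c$. Let $\mathcal{E}\subset\{x\in[0,C]: r(x)\le c^*x\}$ be any (measurable) set, and define $r_{\mathcal E}(x)=r(x)\mathbf 1(x\notin\mathcal E)$. Then the profitability threshold associated with $r_{\mathcal E}$, i.e. the unique root on $\mathbb{R}_+$ of $c\mapsto\lambda\mathbb{E}[(r_{\mathcal E}(X)-cX)_+]-c$, equals $c^*$; equivalently, $$c^*=\lambda\,\mathbb{E}\big[(r_{\mathcal E}(X)-c^*X)_+\big].$$
   Context: $(z)_+=\max\{z,0\}$. *)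

theory Defs
  imports "HOL-Probability.Probability"
begin

definition Phi :: "'a measure \<Rightarrow> ('a \<Rightarrow> real) \<Rightarrow> (real \<Rightarrow> real) \<Rightarrow> real \<Rightarrow> real \<Rightarrow> real" where
  "Phi M X r lam c = lam * (\<integral>\<omega>. max (r (X \<omega>) - c * X \<omega>) 0 \<partial>M) - c"

definition unique_root_nonneg :: "(real \<Rightarrow> real) \<Rightarrow> real \<Rightarrow> bool" where
  "unique_root_nonneg f c \<longleftrightarrow> c \<ge> 0 \<and> f c = 0 \<and> (\<forall>c'\<ge>0. f c' = 0 \<longrightarrow> c' = c)"

end

theory Submission
  imports Defs
begin

text \<open>\<open>Phi\<close> is strictly decreasing on \<open>[0, \<infinity>)\<close>, since the expectation is antitone in \<open>c\<close>
  and \<open>-c\<close> is strictly decreasing, so it has at most one nonnegative root. Zeroing \<open>r\<close> on a set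
  where \<open>r(x) \<le> c\<^sup>* x\<close> leaves the integrand \<open>(r(X) - c\<^sup>* X)\<^sub>+\<close> unchanged, because it
  vanishes there anyway; hence the modified \<open>Phi\<close> still has \<open>c\<^sup>*\<close> as a root, and as its only one.\<close>

lemma unique_root_nonnegI:
  assumes "0 \<le> c" and "f c = 0"
    and "\<And>a b. 0 \<le> a \<Longrightarrow> a < b \<Longrightarrow> f b < f a"
  shows "unique_root_nonneg f c"
  unfolding unique_root_nonneg_def
proof (intro conjI allI impI)
  fix c' assume "0 \<le> c'" "f c' = 0"
  then show "c' = c"
    using assms by (metis linorder_neqE_linordered_idom order_less_irrefl)
qed (use assms in auto)

lemma integrable_pos_part_sub_mult:
  fixes g X :: "'a \<Rightarrow> real"
  assumes "finite_measure M"
    and "g \<in> borel_measurable M" and "X \<in> borel_measurable M"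
    and "\<And>\<omega>. \<omega> \<in> space M \<Longrightarrow> g \<omega> \<le> D \<and> 0 \<le> X \<omega>"
    and "0 \<le> c"
  shows "integrable M (\<lambda>\<omega>. max (g \<omega> - c * X \<omega>) 0)"
proof (rule finite_measure.integrable_const_bound[OF assms(1), where B = "max D 0"])
  show "AE \<omega> in M. norm (max (g \<omega> - c * X \<omega>) 0) \<le> max D 0"
  proof (rule AE_I2)
    fix \<omega> assume "\<omega> \<in> space M"
    with assms(4,5) have "g \<omega> \<le> D" "0 \<le> c * X \<omega>" by auto
    then show "norm (max (g \<omega> - c * X \<omega>) 0) \<le> max D 0" by auto
  qed
qed (use assms(2,3) in measurable)

lemma Phi_strict_antimono:
  assumes "finite_measure M" and "0 \<le> lam"
    and "(\<lambda>\<omega>. r (X \<omega>)) \<in> borel_measurable M" and "X \<in> borel_measurable M"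
    and "\<And>\<omega>. \<omega> \<in> space M \<Longrightarrow> r (X \<omega>) \<le> D \<and> 0 \<le> X \<omega>"
    and "0 \<le> a" and "a < b"
  shows "Phi M X r lam b < Phi M X r lam a"
proof -
  note int = integrable_pos_part_sub_mult[OF assms(1,3,4,5)]
  have "(\<integral>\<omega>. max (r (X \<omega>) - b * X \<omega>) 0 \<partial>M) \<le> (\<integral>\<omega>. max (r (X \<omega>) - a * X \<omega>) 0 \<partial>M)"
  proof (rule integral_mono[OF int int])
    fix \<omega> assume "\<omega> \<in> space M"
    with assms(5,7) have "a * X \<omega> \<le> b * X \<omega>" by (simp add: mult_right_mono)
    then show "max (r (X \<omega>) - b * X \<omega>) 0 \<le> max (r (X \<omega>) - a * X \<omega>) 0" by simp
  qed (use assms(6,7) in auto)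
  then have "lam * (\<integral>\<omega>. max (r (X \<omega>) - b * X \<omega>) 0 \<partial>M)
      \<le> lam * (\<integral>\<omega>. max (r (X \<omega>) - a * X \<omega>) 0 \<partial>M)"
    using assms(2) by (rule mult_left_mono)
  then show ?thesis
    unfolding Phi_def using assms(7) by linarith
qed

lemma Phi_cut_below_line:
  assumes "0 \<le> c" and "\<And>x. x \<in> Ee \<Longrightarrow> 0 \<le> x \<and> r x \<le> c * x"
  shows "Phi M X (\<lambda>x. if x \<in> Ee then 0 else r x) lam c = Phi M X r lam c"
proof -
  have "max ((if X \<omega> \<in> Ee then 0 else r (X \<omega>)) - c * X \<omega>) 0 = max (r (X \<omega>) - c * X \<omega>) 0"
    for \<omega>
    using assms mult_nonneg_nonneg[OF assms(1)] by fastforce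
  then show ?thesis
    unfolding Phi_def by simp
qed

lemma borel_measurable_cut_comp:
  assumes "X \<in> borel_measurable M" and "\<And>\<omega>. \<omega> \<in> space M \<Longrightarrow> X \<omega> \<in> S"
    and "r \<in> borel_measurable (restrict_space borel S)" and "Ee \<in> sets borel"
  shows "(\<lambda>\<omega>. if X \<omega> \<in> Ee then 0 else r (X \<omega>)) \<in> borel_measurable M"
proof (rule measurable_If)
  have "X \<in> measurable M (restrict_space borel S)"
    using assms(1,2) by (auto intro: measurable_restrict_space2)
  from measurable_comp[OF this assms(3)]
  show "(\<lambda>\<omega>. r (X \<omega>)) \<in> borel_measurable M" by (simp add: comp_def)
  show "{\<omega> \<in> space M. X \<omega> \<in> Ee} \<in> sets M"
    using measurable_sets[OF assms(1,4)] by (simp add: vimage_def Int_def conj_commute)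
qed simp

theorem lemma4p2:
  fixes M :: "'a measure" and X :: "'a \<Rightarrow> real" and r :: "real \<Rightarrow> real"
    and C E D lam cstar :: real and Ee :: "real set"
  assumes "prob_space M"
    and "X \<in> borel_measurable M"
    and "\<forall>\<omega>\<in>space M. X \<omega> \<in> {0..C}"
    and "r \<in> borel_measurable (restrict_space borel {0..C})"
    and "\<forall>x\<in>{0..C}. r x \<in> {E..D}"
    and "E \<le> 0" and "0 \<le> D"
    and "lam > 0"
    and "unique_root_nonneg (Phi M X r lam) cstar"
    and "Ee \<in> sets borel"
    and "Ee \<subseteq> {x \<in> {0..C}. r x \<le> cstar * x}"
  shows "unique_root_nonneg (Phi M X (\<lambda>x. if x \<in> Ee then 0 else r x) lam) cstar
         \<and> cstar = lam * (\<integral>\<omega>. max ((if X \<omega> \<in> Ee then 0 else r (X \<omega>)) - cstar * X \<omega>) 0 \<partial>M)"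
proof -
  let ?rE = "\<lambda>x. if x \<in> Ee then 0 else r x"
  have finite: "finite_measure M"
    using assms(1) by (simp add: prob_space_def)
  have cstar: "0 \<le> cstar" "Phi M X r lam cstar = 0"
    using assms(9) unfolding unique_root_nonneg_def by auto
  have root: "Phi M X ?rE lam cstar = 0"
    using Phi_cut_below_line[of cstar Ee r M X lam] assms(11) cstar by auto
  have "Phi M X ?rE lam b < Phi M X ?rE lam a" if "0 \<le> a" "a < b" for a b
  proof (rule Phi_strict_antimono[OF finite _ _ assms(2) _ that, where D = D])
    show "(\<lambda>\<omega>. ?rE (X \<omega>)) \<in> borel_measurable M"
      using borel_measurable_cut_comp[OF assms(2) _ assms(4,10)] assms(3) by simp
    show "?rE (X \<omega>) \<le> D \<and> 0 \<le> X \<omega>" if "\<omega> \<in> space M" for \<omega>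
      using assms(3,5,7) that by fastforce
  qed (use assms(8) in simp)
  with cstar(1) root have "unique_root_nonneg (Phi M X ?rE lam) cstar"
    by (rule unique_root_nonnegI)
  with root show ?thesis
    unfolding Phi_def by simp
qed

end
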